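(* The at-the-point product of two cobweb tiling sequences need not be a cobweb tiling sequence. Specifically, let $A=(n_A)_{n\ge0}$ with $0_A=1$, $n_A=2$ for even $n\ge2$ and $n_A=1$ for odd $n$; and let $B=(n_B)_{n\ge0}$ with $0_B=1$, $n_B=3$ for $n\ge1$ with $3\mid n$ and $n_B=1$ otherwise. Then $A$ and $B$ are cobweb tiling sequences, while $A\cdot B$ (defined by $n_{A\cdot B}=n_A n_B$) is not a cobweb tiling sequence.
   Context: Notation: $n_F\equiv F_n$. A sequence $F=(n_F)_{n\ge0}$ of natural numbers with $0_F=1$ is cobweb-admissible iff every $F$-nomial coefficient $\binom{n}{k}_F=\frac{n_F(n-1)_F\cdots(n-k+1)_F}{1_F2_F\cdots k_F}$, $0\le k\le n$, is a nonnegative integer. The cobweb poset of $F$ has, for each $s\ge1$, a level $\Phi_s$ consisting of $s_F$ distinct vertices (levels pairwise disjoint), plus a root level $\Phi_0$ with one vertex; for $x\in\Phi_i$, $y\in\Phi_j$ one has $x<y$ iff $i<j$. For $1\le a\le b$, the layer $\langle\Phi_a\to\Phi_b\rangle$ is the subposet on $\Phi_a\cup\dots\cup\Phi_b$; it has $m=b-a+1$ levels and its maximal chains form the set $\Phi_a\times\dots\times\Phi_b$. For a permutation $\sigma$ of $\{1,\dots,m\}$, a block of type $\sigma P_m$ in this layer is the subposet induced on $V_a\cup\dots\cup V_b$ where $V_{a-1+i}\subseteq\Phi_{a-1+i}$ and $|V_{a-1+i}|=\sigma(i)_F$ for $i=1,\dots,m$; its maximal chains form the set $V_a\times\dots\times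 V_b$. A tiling of the layer is a finite family of such blocks ($\sigma$ may vary from block to block) whose sets $V_a\times\dots\times V_b$ partition $\Phi_a\times\dots\times\Phi_b$ (pairwise max-disjoint and covering all maximal chains). A cobweb tiling sequence is a cobweb-admissible sequence $F$ such that for all $1\le a\le b$ the layer $\langle\Phi_a\to\Phi_b\rangle$ admits a tiling by blocks of type $\sigma P_{b-a+1}$. *)

theory Defs
  imports "HOL-Library.FuncSet" "HOL-Combinatorics.Permutations"
begin

text \<open>A sequence F is represented as a function nat to nat, with F n the value n_F.\<close>

text \<open>Cobweb-admissibility: F 0 = 1 and every F-nomial coefficient
  (F n * ... * F (n-k+1)) / (F 1 * ... * F k), 0 <= k <= n, is a well-defined
  (nonzero denominator) nonnegative integer.\<close>
definition cobweb_admissible :: "(nat \<Rightarrow> nat) \<Rightarrow> bool" where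
  "cobweb_admissible F \<longleftrightarrow> F 0 = 1 \<and>
     (\<forall>n k. k \<le> n \<longrightarrow>
        (\<Prod>i\<in>{1..k}. F i) \<noteq> 0 \<and>
        (\<Prod>i\<in>{1..k}. F i) dvd (\<Prod>i\<in>{1..k}. F (n - k + i)))"

text \<open>Level s of the cobweb poset: vertices (s, j) with j < F s; we identify
  the vertex with its index j. A maximal chain of the layer from level a to level b
  is an (extensional) function assigning to each level i in {a..b} a vertex index.\<close>
definition layer_chains :: "(nat \<Rightarrow> nat) \<Rightarrow> nat \<Rightarrow> nat \<Rightarrow> (nat \<Rightarrow> nat) set" where
  "layer_chains F a b = (\<Pi>\<^sub>E i\<in>{a..b}. {..<F i})"

definition is_block :: "(nat \<Rightarrow> nat) \<Rightarrow> nat \<Rightarrow> nat \<Rightarrow> (nat \<Rightarrow> nat) \<Rightarrow> (nat \<Rightarrow> nat set) \<Rightarrow> bool" where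
  "is_block F a b \<sigma> V \<longleftrightarrow> \<sigma> permutes {1..b - a + 1} \<and>
     (\<forall>i\<in>{1..b - a + 1}. V (a - 1 + i) \<subseteq> {..<F (a - 1 + i)} \<and>
                          card (V (a - 1 + i)) = F (\<sigma> i))"

definition block_chains :: "nat \<Rightarrow> nat \<Rightarrow> (nat \<Rightarrow> nat set) \<Rightarrow> (nat \<Rightarrow> nat) set" where
  "block_chains a b V = (\<Pi>\<^sub>E i\<in>{a..b}. V i)"

definition is_tiling :: "(nat \<Rightarrow> nat) \<Rightarrow> nat \<Rightarrow> nat \<Rightarrow> (nat \<Rightarrow> nat set) set \<Rightarrow> bool" where
  "is_tiling F a b T \<longleftrightarrow> finite T \<and>
     (\<forall>V\<in>T. \<exists>\<sigma>. is_block F a b \<sigma> V) \<and>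
     (\<forall>V\<in>T. \<forall>W\<in>T. V \<noteq> W \<longrightarrow> block_chains a b V \<inter> block_chains a b W = {}) \<and>
     (\<Union>V\<in>T. block_chains a b V) = layer_chains F a b"

definition cobweb_tiling_seq :: "(nat \<Rightarrow> nat) \<Rightarrow> bool" where
  "cobweb_tiling_seq F \<longleftrightarrow> cobweb_admissible F \<and>
     (\<forall>a b. 1 \<le> a \<and> a \<le> b \<longrightarrow> (\<exists>T. is_tiling F a b T))"

definition seqA :: "nat \<Rightarrow> nat" where
  "seqA n = (if n = 0 then 1 else if even n then 2 else 1)"

definition seqB :: "nat \<Rightarrow> nat" where
  "seqB n = (if n = 0 then 1 else if 3 dvd n then 3 else 1)"

end

theory Submission
  imports Defs
begin

(* Both A and B are instances of one family: for p > 0 let dvd_seq p take the value p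
   at the positive multiples of p and the value 1 elsewhere (A = dvd_seq 2, B = dvd_seq 3).

   A window of k consecutive positive integers contains at least as many
   multiples of p as {1..k}.  Hence the F-nomial coefficients of dvd_seq p are powers of p
   (admissibility), and in every layer there is a permutation sigma sending each level
   a-1+i to a level sigma i with dvd_seq p (sigma i) dividing dvd_seq p (a-1+i).  A general
   tiling lemma shows that such a permutation always yields a tiling: cut every level j
   into consecutive intervals of length d j = F (sigma (j+1-a)) and take all products of
   such intervals as blocks.

   A block level is a subset of the layer level, so its size is bounded by
   the level size.  In the layer from 5 to 7 of A*B (values 1, 6, 1) the two outer levels
   would both need a block level of size 1, but among (A*B) 1, 2, 3 = 1, 2, 3 only one value
   is at most 1, contradicting injectivity of sigma. *)

definition dvd_seq :: "nat \<Rightarrow> nat \<Rightarrow> nat" where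
  "dvd_seq p n = (if n = 0 then 1 else if p dvd n then p else 1)"

lemma seqA_eq_dvd_seq: "seqA = dvd_seq 2"
  by (auto simp: fun_eq_iff seqA_def dvd_seq_def)

lemma seqB_eq_dvd_seq: "seqB = dvd_seq 3"
  by (auto simp: fun_eq_iff seqB_def dvd_seq_def)

text \<open>Shifting the window {1..k} to {s+1..s+k} never decreases the number of multiples
  of p: subtracting s mod p injects the former multiples into the latter.\<close>
lemma card_multiples_shift_le:
  assumes p: "(p::nat) > 0"
  shows "card {i\<in>{1..k}. p dvd i} \<le> card {i\<in>{1..k}. p dvd (s + i)}"
proof -
  let ?r = "s mod p"
  have r: "?r < p" using p by simp
  have ge: "i \<ge> p" if "i \<in> {i\<in>{1..k}. p dvd i}" for i
    using that by (auto intro: dvd_imp_le)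
  have "inj_on (\<lambda>i. i - ?r) {i\<in>{1..k}. p dvd i}"
  proof (rule inj_onI)
    fix i j assume "i \<in> {i\<in>{1..k}. p dvd i}" "j \<in> {i\<in>{1..k}. p dvd i}" "i - ?r = j - ?r"
    with ge[of i] ge[of j] r show "i = j" by linarith
  qed
  moreover have "(\<lambda>i. i - ?r) ` {i\<in>{1..k}. p dvd i} \<subseteq> {i\<in>{1..k}. p dvd (s + i)}"
  proof
    fix x assume "x \<in> (\<lambda>i. i - ?r) ` {i\<in>{1..k}. p dvd i}"
    then obtain i where i: "i \<in> {i\<in>{1..k}. p dvd i}" and x: "x = i - ?r" by auto
    have "i \<ge> p" using ge[OF i] .
    have shift: "s + x = (s - ?r) + i" using \<open>i \<ge> p\<close> r x by simp
    have "p dvd (s - ?r) + i" using i by (intro dvd_add) (auto simp: minus_mod_eq_mult_div)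
    hence "p dvd (s + x)" by (simp only: shift)
    moreover have "x \<in> {1..k}" using i x \<open>i \<ge> p\<close> r by auto
    ultimately show "x \<in> {i\<in>{1..k}. p dvd (s + i)}" by simp
  qed
  ultimately show ?thesis by (rule card_inj_on_le) simp
qed

lemma prod_dvd_seq:
  "(\<Prod>i\<in>{1..k}. dvd_seq p (s + i)) = p ^ card {i\<in>{1..k}. p dvd (s + i)}"
proof -
  have "(\<Prod>i\<in>{1..k}. dvd_seq p (s + i)) = (\<Prod>i\<in>{1..k}. if p dvd (s + i) then p else 1)"
    by (rule prod.cong) (auto simp: dvd_seq_def)
  also have "\<dots> = (\<Prod>i\<in>{i\<in>{1..k}. p dvd (s + i)}. p)"
    by (rule prod.inter_filter[symmetric]) simp
  finally show ?thesis by simp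
qed

lemma cobweb_admissible_dvd_seq:
  assumes p: "(p::nat) > 0"
  shows "cobweb_admissible (dvd_seq p)"
  unfolding cobweb_admissible_def
proof (intro conjI allI impI)
  show "dvd_seq p 0 = 1" by (simp add: dvd_seq_def)
  fix n k :: nat
  have denominator: "(\<Prod>i\<in>{1..k}. dvd_seq p i) = p ^ card {i\<in>{1..k}. p dvd i}"
    using prod_dvd_seq[where s = 0] by simp
  then show "(\<Prod>i\<in>{1..k}. dvd_seq p i) \<noteq> 0" using p by simp
  show "(\<Prod>i\<in>{1..k}. dvd_seq p i) dvd (\<Prod>i\<in>{1..k}. dvd_seq p (n - k + i))"
    unfolding denominator prod_dvd_seq
    by (rule le_imp_power_dvd) (rule card_multiples_shift_le[OF p])
qed

section \<open>Tilings from permutations with divisibility\<close>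

lemma permutes_preimage_subset:
  assumes "finite U" "X \<subseteq> U" "Y \<subseteq> U" "card X \<le> card Y"
  obtains \<sigma> where "\<sigma> permutes U" "\<And>i. i \<in> U \<Longrightarrow> \<sigma> i \<in> X \<Longrightarrow> i \<in> Y"
proof -
  have fX: "finite X" using assms finite_subset by auto
  obtain Y' where Y': "Y' \<subseteq> Y" "card Y' = card X" "finite Y'"
    using obtain_subset_with_card_n[OF assms(4)] by metis
  obtain g where g: "bij_betw g Y' X" using finite_same_card_bij[OF Y'(3) fX Y'(2)] by blast
  have "card (U - Y') = card (U - X)"
    using Y' assms fX by (simp add: card_Diff_subset subset_trans)
  then obtain h where h: "bij_betw h (U - Y') (U - X)"
    using finite_same_card_bij assms(1) by blast
  have h': "bij_betw (\<lambda>i. if i \<in> U then h i else i) (U - Y') (U - X)"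
    using h by (rule bij_betw_cong[THEN iffD1, rotated]) auto
  define \<sigma> where "\<sigma> = (\<lambda>x. if x \<in> Y' then g x else if x \<in> U then h x else x)"
  have "bij_betw \<sigma> (Y' \<union> (U - Y')) (X \<union> (U - X))"
    unfolding \<sigma>_def by (rule bij_betw_disjoint_Un[OF g h']) auto
  moreover have "Y' \<union> (U - Y') = U" "X \<union> (U - X) = U" using Y' assms by auto
  ultimately have "bij_betw \<sigma> U U" by simp
  then have "\<sigma> permutes U"
    by (rule bij_imp_permutes) (use Y' assms in \<open>auto simp: \<sigma>_def\<close>)
  moreover have "i \<in> Y" if "i \<in> U" "\<sigma> i \<in> X" for i
  proof (cases "i \<in> Y'")
    case False
    then have "\<sigma> i \<in> U - X" using h that bij_betwE by (fastforce simp: \<sigma>_def)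
    with that show ?thesis by simp
  qed (use Y' in auto)
  ultimately show ?thesis using that by blast
qed

definition box :: "(nat \<Rightarrow> nat) \<Rightarrow> (nat \<Rightarrow> nat) \<Rightarrow> nat \<Rightarrow> nat set" where
  "box d c j = {c j * d j ..< c j * d j + d j}"

definition box_indices :: "(nat \<Rightarrow> nat) \<Rightarrow> (nat \<Rightarrow> nat) \<Rightarrow> nat \<Rightarrow> nat \<Rightarrow> (nat \<Rightarrow> nat) set" where
  "box_indices F d a b = (\<Pi>\<^sub>E j\<in>{a..b}. {..< F j div d j})"

lemma mem_box_iff:
  assumes "0 < d j"
  shows "x \<in> box d c j \<longleftrightarrow> x div d j = c j"
proof
  assume "x \<in> box d c j"
  then show "x div d j = c j" by (intro div_nat_eqI) (auto simp: box_def algebra_simps)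
next
  assume "x div d j = c j"
  moreover have "x = x div d j * d j + x mod d j" "x mod d j < d j" using assms by simp_all
  ultimately show "x \<in> box d c j" unfolding box_def by (metis atLeastLessThan_iff le_add1 add_less_cancel_left)
qed

lemma block_chains_box_iff:
  assumes "\<forall>j\<in>{a..b}. 0 < d j"
  shows "f \<in> block_chains a b (box d c) \<longleftrightarrow>
           f \<in> extensional {a..b} \<and> (\<forall>j\<in>{a..b}. f j div d j = c j)"
  using assms mem_box_iff by (auto simp: block_chains_def PiE_iff)

lemma box_subset_level:
  assumes "c \<in> box_indices F d a b" "j \<in> {a..b}" "d j dvd F j"
  shows "box d c j \<subseteq> {..<F j}"
proof
  fix x assume x: "x \<in> box d c j"
  have "c j < F j div d j" using assms by (auto simp: box_indices_def)
  hence "(c j + 1) * d j \<le> (F j div d j) * d j" by (intro mult_le_mono1) simp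
  also have "\<dots> = F j" using assms(3) by simp
  finally show "x \<in> {..<F j}" using x by (auto simp: box_def)
qed

lemma boxes_disjoint:
  assumes d: "\<forall>j\<in>{a..b}. 0 < d j"
    and c: "c \<in> box_indices F d a b" "c' \<in> box_indices F d a b" and ne: "box d c \<noteq> box d c'"
  shows "block_chains a b (box d c) \<inter> block_chains a b (box d c') = {}"
proof (rule ccontr)
  assume "block_chains a b (box d c) \<inter> block_chains a b (box d c') \<noteq> {}"
  then obtain f where "f \<in> block_chains a b (box d c)" "f \<in> block_chains a b (box d c')"
    by blast
  then have "\<forall>j\<in>{a..b}. c j = c' j" using block_chains_box_iff[OF d] by simp
  moreover have "c \<in> extensional {a..b}" "c' \<in> extensional {a..b}"
    using c by (auto simp: box_indices_def PiE_iff)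
  ultimately have "c = c'" by (metis extensionalityI)
  with ne show False by simp
qed

lemma boxes_cover:
  assumes d: "\<forall>j\<in>{a..b}. 0 < d j \<and> d j dvd F j" and f: "f \<in> layer_chains F a b"
  shows "\<exists>c\<in>box_indices F d a b. f \<in> block_chains a b (box d c)"
proof
  define c where "c = restrict (\<lambda>j. f j div d j) {a..b}"
  have "f j div d j < F j div d j" if "j \<in> {a..b}" for j
  proof (rule less_mult_imp_div_less)
    have "f j < F j" using f that by (auto simp: layer_chains_def PiE_iff)
    also have "F j = F j div d j * d j" using d that by simp
    finally show "f j < F j div d j * d j" .
  qed
  then show "c \<in> box_indices F d a b" by (auto simp: box_indices_def c_def)
  show "f \<in> block_chains a b (box d c)"
    using f d block_chains_box_iff[of a b d] by (auto simp: c_def layer_chains_def PiE_iff)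
qed

lemma tiling_from_permutation:
  assumes perm: "\<sigma> permutes {1..b - a + 1}" and ab: "1 \<le> a" "a \<le> b"
    and dvd: "\<forall>i\<in>{1..b - a + 1}. 0 < F (\<sigma> i) \<and> F (\<sigma> i) dvd F (a - 1 + i)"
  shows "\<exists>T. is_tiling F a b T"
proof -
  define d where "d j = F (\<sigma> (j + 1 - a))" for j
  have d_level: "0 < d j \<and> d j dvd F j" if "j \<in> {a..b}" for j
  proof -
    have i: "j + 1 - a \<in> {1..b - a + 1}" and j: "a - 1 + (j + 1 - a) = j"
      using that ab by auto
    show ?thesis using dvd[rule_format, OF i] unfolding j d_def .
  qed
  define T where "T = box d ` box_indices F d a b"
  have blocks: "is_block F a b \<sigma> (box d c)" if c: "c \<in> box_indices F d a b" for c
    unfolding is_block_def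
  proof (intro conjI perm ballI)
    fix i assume i: "i \<in> {1..b - a + 1}"
    then have j: "a - 1 + i \<in> {a..b}" and jj: "a - 1 + i + 1 - a = i" using ab by auto
    show "box d c (a - 1 + i) \<subseteq> {..<F (a - 1 + i)}"
      using box_subset_level[OF c j] d_level[OF j] by simp
    show "card (box d c (a - 1 + i)) = F (\<sigma> i)" using jj by (simp add: box_def d_def)
  qed
  have "is_tiling F a b T"
    unfolding is_tiling_def
  proof (intro conjI ballI impI)
    show "finite T" unfolding T_def box_indices_def by (auto intro!: finite_PiE)
    show "\<exists>\<sigma>. is_block F a b \<sigma> V" if "V \<in> T" for V
      using blocks that unfolding T_def by blast
    show "block_chains a b V \<inter> block_chains a b W = {}" if "V \<in> T" "W \<in> T" "V \<noteq> W" for V W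
      using that boxes_disjoint[of a b d] d_level unfolding T_def by blast
    show "(\<Union>V\<in>T. block_chains a b V) = layer_chains F a b"
    proof
      show "(\<Union>V\<in>T. block_chains a b V) \<subseteq> layer_chains F a b"
        using box_subset_level d_level
        unfolding T_def block_chains_def layer_chains_def PiE_iff by blast
      show "layer_chains F a b \<subseteq> (\<Union>V\<in>T. block_chains a b V)"
        using boxes_cover[of a b d F] d_level unfolding T_def by blast
    qed
  qed
  then show ?thesis ..
qed

text \<open>Every dvd_seq p is a cobweb tiling sequence: since the layer levels a-1+i contain
  at least as many multiples of p as the indices i, a permutation can send every index
  level with value p onto a layer level with value p.\<close>
lemma cobweb_tiling_seq_dvd_seq:
  assumes p: "(p::nat) > 0"
  shows "cobweb_tiling_seq (dvd_seq p)"
  unfolding cobweb_tiling_seq_def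
proof (intro conjI allI impI cobweb_admissible_dvd_seq[OF p])
  fix a b :: nat assume ab: "1 \<le> a \<and> a \<le> b"
  let ?U = "{1..b - a + 1}"
  let ?X = "{i\<in>?U. p dvd i}" and ?Y = "{i\<in>?U. p dvd (a - 1 + i)}"
  have "card ?X \<le> card ?Y" by (rule card_multiples_shift_le[OF p])
  then obtain \<sigma> where \<sigma>: "\<sigma> permutes ?U"
    and preimage: "\<And>i. i \<in> ?U \<Longrightarrow> \<sigma> i \<in> ?X \<Longrightarrow> i \<in> ?Y"
    by (rule permutes_preimage_subset[of ?U ?X ?Y, rotated 3]) auto
  have marked: "p dvd (a - 1 + i)" if "i \<in> ?U" "\<sigma> i \<in> ?X" for i
    using preimage[OF that] by simp
  have "0 < dvd_seq p (\<sigma> i) \<and> dvd_seq p (\<sigma> i) dvd dvd_seq p (a - 1 + i)" if i: "i \<in> ?U" for i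
  proof -
    have "\<sigma> i \<in> ?U" using permutes_in_image[OF \<sigma>] i by simp
    then show ?thesis using marked[OF i] p ab i by (auto simp: dvd_seq_def)
  qed
  then show "\<exists>T. is_tiling (dvd_seq p) a b T"
    using tiling_from_permutation[OF \<sigma>] ab by blast
qed

section \<open>The product A*B is not a cobweb tiling sequence\<close>

lemma is_block_le_level:
  assumes "is_block F a b \<sigma> V" "i \<in> {1..b - a + 1}"
  shows "F (\<sigma> i) \<le> F (a - 1 + i)"
proof -
  have "V (a - 1 + i) \<subseteq> {..<F (a - 1 + i)}" "card (V (a - 1 + i)) = F (\<sigma> i)"
    using assms by (auto simp: is_block_def)
  then show ?thesis by (metis card_lessThan card_mono finite_lessThan)
qed

lemma tiling_has_block:
  assumes "is_tiling F a b T" "\<forall>j\<in>{a..b}. 0 < F j"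
  obtains \<sigma> V where "is_block F a b \<sigma> V"
proof -
  have "restrict (\<lambda>_. 0) {a..b} \<in> layer_chains F a b"
    using assms(2) by (auto simp: layer_chains_def)
  then obtain V where "V \<in> T" using assms(1) unfolding is_tiling_def by blast
  then show ?thesis using assms(1) that unfolding is_tiling_def by blast
qed

text \<open>In the layer from 5 to 7 of A*B (level sizes 1, 6, 1) the outer block levels must
  both have size (A*B) (sigma i) \<le> 1, forcing sigma 1 = sigma 3 = 1.\<close>
lemma not_cobweb_tiling_product: "\<not> cobweb_tiling_seq (\<lambda>n. seqA n * seqB n)"
proof
  let ?C = "\<lambda>n. seqA n * seqB n"
  have small_values: "?C 1 = 1" "?C 2 = 2" "?C 3 = 3" "?C 5 = 1" "?C 7 = 1"
    by (simp_all add: seqA_def seqB_def)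
  assume "cobweb_tiling_seq ?C"
  then obtain T where "is_tiling ?C 5 7 T" unfolding cobweb_tiling_seq_def by force
  moreover have "\<forall>j\<in>{5..7}. 0 < ?C j" by (simp add: seqA_def seqB_def)
  ultimately obtain \<sigma> V where block: "is_block ?C 5 7 \<sigma> V" by (rule tiling_has_block)
  then have \<sigma>: "\<sigma> permutes {1..3}" by (simp add: is_block_def)
  have outer: "\<sigma> i = 1" if "i \<in> {1, 3}" for i
  proof -
    have "?C (\<sigma> i) \<le> 1" using is_block_le_level[OF block, of i] that small_values by auto
    moreover have "\<sigma> i \<in> {1..3}"
      using that by (intro permutes_in_image[OF \<sigma>, THEN iffD2]) auto
    then have "\<sigma> i = 1 \<or> \<sigma> i = 2 \<or> \<sigma> i = 3" by auto
    ultimately show ?thesis using small_values by auto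
  qed
  have "\<sigma> 1 = \<sigma> 3" using outer by simp
  then show False using permutes_inj[OF \<sigma>] by (auto dest: injD)
qed

theorem mainTheorem4:
  shows "cobweb_tiling_seq seqA \<and> cobweb_tiling_seq seqB \<and>
         \<not> cobweb_tiling_seq (\<lambda>n. seqA n * seqB n)"
  using cobweb_tiling_seq_dvd_seq[of 2] cobweb_tiling_seq_dvd_seq[of 3]
    not_cobweb_tiling_product
  by (simp add: seqA_eq_dvd_seq seqB_eq_dvd_seq)

end
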